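(* Let $F$ be a field, $n$ an even positive integer, and $A \in F^{n\times n}$ a matrix that is diagonalizable over an extension field of $F$ with $n$ distinct eigenvalues. For $t \in F$ let $$\widetilde{A} = \begin{bmatrix} I & -tI\\ 0 & I\end{bmatrix} A \begin{bmatrix} I & tI \\ 0 & I\end{bmatrix},$$ where $I$ is the $(n/2)\times(n/2)$ identity. Then for all but at most $n/2$ values of $t \in F$ the following holds: if $a = (a_1,\dots,a_{n/2})^T$ and $b = (b_1,\dots,b_{n/2})^T$ are vectors of independent indeterminates and $$v = \begin{bmatrix} a & 0 \\ 0 & b\end{bmatrix} \in F[a_1,\dots,a_{n/2},b_1,\dots,b_{n/2}]^{n\times 2},$$ then $\det \mathcal{K}(\widetilde{A}, v) = \det[\, v \mid \widetilde{A}v \mid \cdots \mid \widetilde{A}^{n/2-1} v\,]$ is a nonzero polynomial. In particular, if $F$ is infinite (or sufficiently large), there exist $a,b \in F^{n/2}$ for which $\mathcal{K}(\widetilde{A},v)$ is nonsingular.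
   Context: For $A \in F^{n\times n}$, $s \mid n$, $m = n/s$ and $v$ with $s$ columns, $\mathcal{K}(A,v) := [\, v \mid Av \mid \cdots \mid A^{m-1}v\,]$; here $s=2$ and $m = n/2$. *)

theory Defs
  imports "Jordan_Normal_Form.Determinant" "Jordan_Normal_Form.Ring_Hom_Matrix" "HOL-Library.Poly_Mapping"
begin

text \<open>Multivariate polynomials over 'a: finitely supported maps from monomials
  (exponent vectors) to coefficients.\<close>
type_synonym 'a mpoly = "(nat \<Rightarrow>\<^sub>0 nat) \<Rightarrow>\<^sub>0 'a"

definition mp_const :: "'a::comm_ring_1 \<Rightarrow> 'a mpoly" where
  "mp_const c = Poly_Mapping.single 0 c"

definition mp_var :: "nat \<Rightarrow> 'a::comm_ring_1 mpoly" where
  "mp_var i = Poly_Mapping.single (Poly_Mapping.single i 1) 1"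

definition krylov :: "'a::comm_ring_1 mat \<Rightarrow> 'a mat \<Rightarrow> 'a mat" where
  "krylov A v = (let n = dim_row A; s = dim_col v; m = n div s in
     mat n (m * s) (\<lambda>(i, j). (A ^\<^sub>m (j div s) * v) $$ (i, j mod s)))"

definition shear :: "nat \<Rightarrow> 'a::comm_ring_1 \<Rightarrow> 'a mat" where
  "shear m t = four_block_mat (1\<^sub>m m) (t \<cdot>\<^sub>m 1\<^sub>m m) (0\<^sub>m m m) (1\<^sub>m m)"

definition A_tilde :: "nat \<Rightarrow> 'a::comm_ring_1 \<Rightarrow> 'a mat \<Rightarrow> 'a mat" where
  "A_tilde m t A = shear m (- t) * A * shear m t"

definition vblock :: "nat \<Rightarrow> (nat \<Rightarrow> 'a::zero) \<Rightarrow> (nat \<Rightarrow> 'a) \<Rightarrow> 'a mat" where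
  "vblock m a b = mat (2 * m) 2
     (\<lambda>(i, j). if j = 0 then (if i < m then a i else 0)
               else (if i < m then 0 else b (i - m)))"

definition v_indet :: "nat \<Rightarrow> 'a::comm_ring_1 mpoly mat" where
  "v_indet m = vblock m (\<lambda>i. mp_var i) (\<lambda>i. mp_var (m + i))"

end

theory Submission
  imports Defs "Jordan_Normal_Form.Char_Poly" "Jordan_Normal_Form.DL_Rank"
begin

(* Over the extension field, h(A) = P D P^-1 with D diagonal, so h(A_tilde t) = P_t D P_t^-1 for
   P_t = [[I, -tI], [0, I]] P. Choose m columns J on which the bottom block of P is nonsingular;
   the top block of P_t on J is then P_top - t P_bot, which is singular for at most m values of t
   (a regular matrix pencil). For the remaining t the indeterminates are specialised to
   polynomials in a new variable x such that, after conjugation by P_t^-1, the two columns of v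
   agree exactly on the m rows outside J and are nonzero there. For a diagonal matrix with
   distinct eigenvalues this forces the Krylov matrix to be nonsingular, so det K(A_tilde, v) is
   a nonzero polynomial; over an infinite field a nonzero polynomial has a nonvanishing point. *)

section \<open>Evaluation of multivariate polynomials\<close>

definition monomial_eval :: "(nat \<Rightarrow> 'c::comm_monoid_mult) \<Rightarrow> (nat \<Rightarrow>\<^sub>0 nat) \<Rightarrow> 'c" where
  "monomial_eval \<sigma> \<mu> = (\<Prod>i\<in>Poly_Mapping.keys \<mu>. \<sigma> i ^ Poly_Mapping.lookup \<mu> i)"

definition mpoly_eval :: "('a::comm_ring_1 \<Rightarrow> 'c::comm_ring_1) \<Rightarrow> (nat \<Rightarrow> 'c) \<Rightarrow> 'a mpoly \<Rightarrow> 'c" where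
  "mpoly_eval g \<sigma> p = (\<Sum>\<mu>\<in>Poly_Mapping.keys p. g (Poly_Mapping.lookup p \<mu>) * monomial_eval \<sigma> \<mu>)"

lemma monomial_eval_superset:
  assumes "finite K" "Poly_Mapping.keys \<mu> \<subseteq> K"
  shows "monomial_eval \<sigma> \<mu> = (\<Prod>i\<in>K. \<sigma> i ^ Poly_Mapping.lookup \<mu> i)"
  unfolding monomial_eval_def
  by (rule prod.mono_neutral_left[OF assms]) (auto simp: in_keys_iff)

lemma monomial_eval_add: "monomial_eval \<sigma> (\<mu> + \<nu>) = monomial_eval \<sigma> \<mu> * monomial_eval \<sigma> \<nu>"
proof -
  let ?K = "Poly_Mapping.keys \<mu> \<union> Poly_Mapping.keys \<nu>"
  have "monomial_eval \<sigma> (\<mu> + \<nu>) = (\<Prod>i\<in>?K. \<sigma> i ^ Poly_Mapping.lookup (\<mu> + \<nu>) i)"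
    by (rule monomial_eval_superset) (auto simp: in_keys_iff lookup_add)
  also have "\<dots> = (\<Prod>i\<in>?K. \<sigma> i ^ Poly_Mapping.lookup \<mu> i) * (\<Prod>i\<in>?K. \<sigma> i ^ Poly_Mapping.lookup \<nu> i)"
    by (simp add: lookup_add power_add prod.distrib)
  also have "\<dots> = monomial_eval \<sigma> \<mu> * monomial_eval \<sigma> \<nu>"
    by (subst (1 2) monomial_eval_superset[of ?K]) auto
  finally show ?thesis .
qed

lemma monomial_eval_zero [simp]: "monomial_eval \<sigma> 0 = 1"
  by (simp add: monomial_eval_def)

lemma monomial_eval_single [simp]: "monomial_eval \<sigma> (Poly_Mapping.single i 1) = \<sigma> i"
  by (simp add: monomial_eval_def)

lemma poly_mapping_sum_singles:
  "p = (\<Sum>\<mu>\<in>Poly_Mapping.keys p. Poly_Mapping.single \<mu> (Poly_Mapping.lookup p \<mu>))"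
  by (rule poly_mapping_eqI) (auto simp: lookup_sum lookup_single when_def in_keys_iff)

context
  fixes g :: "'a::comm_ring_1 \<Rightarrow> 'c::comm_ring_1"
  assumes g: "comm_ring_hom g"
begin

interpretation g: comm_ring_hom g by (rule g)

lemma mpoly_eval_add: "mpoly_eval g \<sigma> (p + q) = mpoly_eval g \<sigma> p + mpoly_eval g \<sigma> q"
  unfolding mpoly_eval_def
  by (rule setsum_keys_plus_distrib) (simp_all add: lookup_add g.hom_add distrib_right)

lemma mpoly_eval_zero [simp]: "mpoly_eval g \<sigma> 0 = 0"
  by (simp add: mpoly_eval_def)

lemma mpoly_eval_sum: "mpoly_eval g \<sigma> (sum f X) = (\<Sum>x\<in>X. mpoly_eval g \<sigma> (f x))"
  by (induct X rule: infinite_finite_induct) (auto simp: mpoly_eval_add)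

lemma mpoly_eval_single [simp]:
  "mpoly_eval g \<sigma> (Poly_Mapping.single \<mu> c) = g c * monomial_eval \<sigma> \<mu>"
  by (cases "c = 0") (auto simp: mpoly_eval_def)

lemma mpoly_eval_mult: "mpoly_eval g \<sigma> (p * q) = mpoly_eval g \<sigma> p * mpoly_eval g \<sigma> q"
proof -
  let ?P = "Poly_Mapping.keys p" and ?Q = "Poly_Mapping.keys q"
  let ?lp = "Poly_Mapping.lookup p" and ?lq = "Poly_Mapping.lookup q"
  have "p * q = (\<Sum>\<mu>\<in>?P. Poly_Mapping.single \<mu> (?lp \<mu>)) * (\<Sum>\<nu>\<in>?Q. Poly_Mapping.single \<nu> (?lq \<nu>))"
    by (subst (1) poly_mapping_sum_singles[of p], subst (1) poly_mapping_sum_singles[of q])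
      (rule refl)
  also have "\<dots> = (\<Sum>\<mu>\<in>?P. \<Sum>\<nu>\<in>?Q. Poly_Mapping.single (\<mu> + \<nu>) (?lp \<mu> * ?lq \<nu>))"
    by (simp add: sum_distrib_left sum_distrib_right mult_single) (subst sum.swap, rule refl)
  finally have "mpoly_eval g \<sigma> (p * q) =
      (\<Sum>\<mu>\<in>?P. \<Sum>\<nu>\<in>?Q. g (?lp \<mu>) * monomial_eval \<sigma> \<mu> * (g (?lq \<nu>) * monomial_eval \<sigma> \<nu>))"
    by (simp add: mpoly_eval_sum g.hom_mult monomial_eval_add ac_simps)
  also have "\<dots> = mpoly_eval g \<sigma> p * mpoly_eval g \<sigma> q"
    unfolding mpoly_eval_def
    by (simp add: sum_distrib_left sum_distrib_right) (subst sum.swap, rule refl)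
  finally show ?thesis .
qed

lemma comm_ring_hom_mpoly_eval: "comm_ring_hom (mpoly_eval g \<sigma>)"
proof
  have "(1 :: 'a mpoly) = Poly_Mapping.single 0 1" by simp
  then show "mpoly_eval g \<sigma> 1 = 1" by (metis mpoly_eval_single monomial_eval_zero g.hom_one mult_1)
qed (simp_all add: mpoly_eval_add mpoly_eval_mult)

lemma mpoly_eval_const [simp]: "mpoly_eval g \<sigma> (mp_const c) = g c"
  by (simp add: mp_const_def)

lemma mpoly_eval_var [simp]: "mpoly_eval g \<sigma> (mp_var i) = \<sigma> i"
  unfolding mp_var_def mpoly_eval_single monomial_eval_single by simp

end

lemma mpoly_eval_comp:
  assumes "comm_ring_hom H"
  shows "H (mpoly_eval g \<sigma> p) = mpoly_eval (H \<circ> g) (H \<circ> \<sigma>) p"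
proof -
  interpret H: comm_ring_hom H by (rule assms)
  show ?thesis
    by (simp add: mpoly_eval_def monomial_eval_def H.hom_sum H.hom_mult H.hom_prod H.hom_power)
qed

text \<open>Coordinates are moved into the image of g one at a time: fixing all but one,
  the evaluation is a nonzero univariate polynomial, which has only finitely many roots.\<close>
lemma mpoly_eval_nonzero_at_image_point:
  fixes g :: "'a::comm_ring_1 \<Rightarrow> 'c::idom"
  assumes inf: "infinite (UNIV :: 'a set)" and "inj g" and nz: "mpoly_eval g \<sigma>\<^sub>0 p \<noteq> 0"
  shows "\<exists>\<sigma>. mpoly_eval g (\<lambda>i. if i < N then g (\<sigma> i) else \<sigma>\<^sub>0 i) p \<noteq> 0"
proof (induct N)
  case 0
  then show ?case using nz by simp
next
  case (Suc N)
  then obtain \<sigma> where \<sigma>: "mpoly_eval g (\<lambda>i. if i < N then g (\<sigma> i) else \<sigma>\<^sub>0 i) p \<noteq> 0" by blast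
  define \<rho> where "\<rho> = (\<lambda>i. if i < N then g (\<sigma> i) else \<sigma>\<^sub>0 i)"
  define q where "q = mpoly_eval (\<lambda>c. [:g c:]) (\<lambda>i. if i = N then [:0, 1:] else [:\<rho> i:]) p"
  have poly_q: "poly q x = mpoly_eval g (\<rho>(N := x)) p" for x
  proof -
    have "poly q x = mpoly_eval ((\<lambda>r. poly r x) \<circ> (\<lambda>c. [:g c:]))
        ((\<lambda>r. poly r x) \<circ> (\<lambda>i. if i = N then [:0, 1:] else [:\<rho> i:])) p"
      unfolding q_def by (rule mpoly_eval_comp[OF poly_hom.comm_ring_hom_axioms])
    also have "((\<lambda>r. poly r x) \<circ> (\<lambda>c. [:g c:])) = g" by auto
    also have "((\<lambda>r. poly r x) \<circ> (\<lambda>i. if i = N then [:0, 1:] else [:\<rho> i:])) = \<rho>(N := x)" by auto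
    finally show ?thesis .
  qed
  have "q \<noteq> 0" using poly_q[of "\<rho> N"] \<sigma> by (auto simp flip: \<rho>_def)
  then have "finite {x. poly q x = 0}" by (rule poly_roots_finite)
  moreover have "infinite (range g)" using inf \<open>inj g\<close> by (auto dest: finite_imageD)
  ultimately obtain s where s: "poly q (g s) \<noteq> 0"
    by (metis (mono_tags, lifting) mem_Collect_eq rangeE subsetI finite_subset)
  have "\<rho>(N := g s) = (\<lambda>i. if i < Suc N then g ((\<sigma>(N := s)) i) else \<sigma>\<^sub>0 i)"
    by (auto simp: \<rho>_def)
  with s show ?case unfolding poly_q by metis
qed

section \<open>Block Krylov matrices\<close>

lemma krylov_carrier:
  assumes "M \<in> carrier_mat n n" "V \<in> carrier_mat n s" "s dvd n"
  shows "krylov M V \<in> carrier_mat n n"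
  using assms by (auto simp: krylov_def Let_def)

lemma krylov_index:
  assumes "M \<in> carrier_mat n n" "V \<in> carrier_mat n s" "s dvd n" "i < n" "j < n"
  shows "krylov M V $$ (i, j) = (M ^\<^sub>m (j div s) * V) $$ (i, j mod s)"
  using assms by (auto simp: krylov_def Let_def)

lemma col_krylov:
  assumes M: "M \<in> carrier_mat n n" and V: "V \<in> carrier_mat n s" and s: "s dvd n" and j: "j < n"
  shows "col (krylov M V) j = col (M ^\<^sub>m (j div s) * V) (j mod s)"
proof -
  have "s > 0" using s j by (auto intro!: Nat.gr0I)
  then show ?thesis
    using krylov_carrier[OF M V s] krylov_index[OF M V s _ j] M V j by (intro eq_vecI) auto
qed

lemma (in comm_ring_hom) krylov_hom:
  assumes M: "M \<in> carrier_mat n n" and V: "V \<in> carrier_mat n s" and s: "s dvd n"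
  shows "map_mat hom (krylov M V) = krylov (map_mat hom M) (map_mat hom V)"
proof -
  have "s > 0" if "n > 0" using s that by (auto intro!: Nat.gr0I)
  then show ?thesis
    using krylov_carrier[OF M V s] krylov_carrier[of "map_mat hom M" n "map_mat hom V" s] M V s
    by (intro eq_matI) (auto simp: krylov_index mat_hom_pow[OF M, symmetric]
        mat_hom_mult[OF pow_carrier_mat[OF M] V, symmetric])
qed

lemma pow_mat_intertwine:
  assumes W: "W \<in> carrier_mat n n" and M: "M \<in> carrier_mat n n" and N: "N \<in> carrier_mat n n"
    and WM: "W * M = N * W"
  shows "W * M ^\<^sub>m k = N ^\<^sub>m k * W"
proof (induct k)
  case 0
  then show ?case using W M N by simp
next
  case (Suc k)
  have "W * M ^\<^sub>m Suc k = (W * M ^\<^sub>m k) * M"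
    using W M by (simp add: assoc_mult_mat[of _ n n _ n _ n])
  also have "\<dots> = N ^\<^sub>m k * (W * M)"
    unfolding Suc using W M N by (simp add: assoc_mult_mat[of _ n n _ n _ n])
  also have "\<dots> = N ^\<^sub>m Suc k * W"
    unfolding WM using W N by (simp add: assoc_mult_mat[of _ n n _ n _ n])
  finally show ?case .
qed

lemma mult_krylov:
  assumes W: "W \<in> carrier_mat n n" and M: "M \<in> carrier_mat n n" and N: "N \<in> carrier_mat n n"
    and WM: "W * M = N * W" and V: "V \<in> carrier_mat n s" and s: "s dvd n"
  shows "W * krylov M V = krylov N (W * V)"
proof -
  have WV: "W * V \<in> carrier_mat n s" using W V by simp
  have "col (W * krylov M V) j = col (krylov N (W * V)) j" if j: "j < n" for j
  proof -
    have "0 < s" using s j by (auto intro!: Nat.gr0I)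
    have MV: "M ^\<^sub>m (j div s) * V \<in> carrier_mat n s"
      using pow_carrier_mat[OF M] V by (rule mult_carrier_mat)
    have "col (W * krylov M V) j = W *\<^sub>v col (M ^\<^sub>m (j div s) * V) (j mod s)"
      by (simp add: col_mult2[OF W krylov_carrier[OF M V s] j] col_krylov[OF M V s j])
    also have "\<dots> = col (W * (M ^\<^sub>m (j div s) * V)) (j mod s)"
      using \<open>0 < s\<close> by (simp add: col_mult2[OF W MV])
    also have "W * (M ^\<^sub>m (j div s) * V) = N ^\<^sub>m (j div s) * (W * V)"
      using W M N V
      by (simp add: pow_mat_intertwine[OF W M N WM] assoc_mult_mat[of _ n n _ n _ s, symmetric])
    finally show ?thesis using col_krylov[OF N WV s j] by simp
  qed
  then show ?thesis
    using W krylov_carrier[OF M V s] krylov_carrier[OF N WV s]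
    by (intro mat_col_eqI) auto
qed

lemma det_krylov_nonzero_intertwine:
  assumes W: "W \<in> carrier_mat n n" and M: "M \<in> carrier_mat n n" and N: "N \<in> carrier_mat n n"
    and WM: "W * M = N * W" and V: "V \<in> carrier_mat n s" and s: "s dvd n"
    and nz: "det (krylov N (W * V)) \<noteq> 0"
  shows "det (krylov M V) \<noteq> 0"
  using nz det_mult[OF W krylov_carrier[OF M V s]]
  by (metis mult_krylov[OF assms(1-6)] mult_zero_right)

lemma vblock_carrier [simp]: "vblock m a b \<in> carrier_mat (2 * m) 2"
  by (simp add: vblock_def)

lemma map_vblock: "E 0 = 0 \<Longrightarrow> map_mat E (vblock m a b) = vblock m (E \<circ> a) (E \<circ> b)"
  by (rule eq_matI) (auto simp: vblock_def)

lemma mpoly_eval_det_krylov_v_indet: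
  assumes g: "comm_ring_hom g" and M: "M \<in> carrier_mat (2 * m) (2 * m)"
  shows "mpoly_eval g \<sigma> (det (krylov (map_mat mp_const M) (v_indet m))) =
    det (krylov (map_mat g M) (vblock m \<sigma> (\<lambda>i. \<sigma> (m + i))))"
proof -
  interpret E: comm_ring_hom "mpoly_eval g \<sigma>" by (rule comm_ring_hom_mpoly_eval[OF g])
  have "map_mat (mpoly_eval g \<sigma>) (map_mat mp_const M) = map_mat g M"
    by (rule eq_matI) (auto simp: mpoly_eval_const[OF g])
  moreover have "map_mat (mpoly_eval g \<sigma>) (v_indet m) = vblock m \<sigma> (\<lambda>i. \<sigma> (m + i))"
    unfolding v_indet_def by (subst map_vblock) (auto simp: o_def mpoly_eval_var[OF g])
  ultimately show ?thesis
    using M E.krylov_hom[of "map_mat mp_const M" "2 * m" "v_indet m" 2]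
    by (simp flip: E.hom_det add: v_indet_def)
qed

lemma det_krylov_v_indet_nonzero:
  assumes g: "comm_ring_hom g" and M: "M \<in> carrier_mat (2 * m) (2 * m)"
    and nz: "det (krylov (map_mat g M) (vblock m a b)) \<noteq> 0"
  shows "det (krylov (map_mat mp_const M) (v_indet m)) \<noteq> 0"
proof -
  define \<sigma> where "\<sigma> i = (if i < m then a i else b (i - m))" for i
  have "vblock m \<sigma> (\<lambda>i. \<sigma> (m + i)) = vblock m a b"
    by (rule eq_matI) (auto simp: vblock_def \<sigma>_def)
  then have "mpoly_eval g \<sigma> (det (krylov (map_mat mp_const M) (v_indet m))) \<noteq> 0"
    using nz by (simp add: mpoly_eval_det_krylov_v_indet[OF g M])
  then show ?thesis using mpoly_eval_zero[OF g] by metis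
qed

lemma exists_vblock_det_krylov_nonzero:
  fixes g :: "'a::comm_ring_1 \<Rightarrow> 'c::idom"
  assumes inf: "infinite (UNIV :: 'a set)" and g: "comm_ring_hom g" "inj g"
    and M: "M \<in> carrier_mat (2 * m) (2 * m)"
    and nz: "det (krylov (map_mat g M) (vblock m a b)) \<noteq> 0"
  shows "\<exists>a b. det (krylov M (vblock m a b)) \<noteq> 0"
proof -
  interpret g: comm_ring_hom g by (rule g(1))
  let ?p = "det (krylov (map_mat mp_const M) (v_indet m))"
  define \<sigma>\<^sub>0 where "\<sigma>\<^sub>0 i = (if i < m then a i else b (i - m))" for i
  have "vblock m \<sigma>\<^sub>0 (\<lambda>i. \<sigma>\<^sub>0 (m + i)) = vblock m a b"
    by (rule eq_matI) (auto simp: vblock_def \<sigma>\<^sub>0_def)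
  then have "mpoly_eval g \<sigma>\<^sub>0 ?p \<noteq> 0"
    using nz by (simp add: mpoly_eval_det_krylov_v_indet[OF g(1) M])
  from mpoly_eval_nonzero_at_image_point[OF inf g(2) this, of "2 * m"]
  obtain \<sigma> where \<sigma>: "mpoly_eval g (\<lambda>i. if i < 2 * m then g (\<sigma> i) else \<sigma>\<^sub>0 i) ?p \<noteq> 0" by blast
  have "vblock m (\<lambda>i. if i < 2 * m then g (\<sigma> i) else \<sigma>\<^sub>0 i)
      (\<lambda>i. if m + i < 2 * m then g (\<sigma> (m + i)) else \<sigma>\<^sub>0 (m + i))
      = map_mat g (vblock m \<sigma> (\<lambda>i. \<sigma> (m + i)))"
    by (rule eq_matI) (auto simp: vblock_def)
  with \<sigma> have "g (det (krylov M (vblock m \<sigma> (\<lambda>i. \<sigma> (m + i))))) \<noteq> 0"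
    using M g.krylov_hom[of M "2 * m" "vblock m \<sigma> (\<lambda>i. \<sigma> (m + i))" 2]
    by (simp flip: g.hom_det add: mpoly_eval_det_krylov_v_indet[OF g(1) M])
  then show ?thesis by (metis g.hom_zero)
qed

section \<open>Nonsingular submatrices\<close>

lemma det_nonzero_left_kernel:
  fixes M :: "'a::idom mat"
  assumes M: "M \<in> carrier_mat n n" and det: "det M \<noteq> 0"
    and y: "\<And>c. c < n \<Longrightarrow> (\<Sum>r<n. y r * M $$ (r, c)) = 0" and r: "r < n"
  shows "y r = 0"
proof -
  have "transpose_mat M *\<^sub>v vec n y = 0\<^sub>v n"
  proof (rule eq_vecI)
    fix c assume "c < dim_vec (0\<^sub>v n :: 'a vec)"
    then have c: "c < n" by simp
    have "(transpose_mat M *\<^sub>v vec n y) $ c = (\<Sum>r\<in>{0..<n}. M $$ (r, c) * y r)"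
      using M c by (simp add: scalar_prod_def)
    also have "\<dots> = 0" using y[OF c] by (simp add: lessThan_atLeast0 mult.commute)
    finally show "(transpose_mat M *\<^sub>v vec n y) $ c = 0\<^sub>v n $ c" using c by simp
  qed (use M in simp)
  moreover have "det (transpose_mat M) \<noteq> 0" using det det_transpose[OF M] by simp
  then have "\<forall>v \<in> carrier_vec n. transpose_mat M *\<^sub>v v = 0\<^sub>v n \<longrightarrow> v = 0\<^sub>v n"
    using det_0_iff_vec_prod_zero[of "transpose_mat M" n] M by auto
  ultimately have "vec n y = 0\<^sub>v n" by simp
  then show ?thesis using r by (metis index_vec index_zero_vec(1))
qed

text \<open>The columns are chosen row by row: Laplace expansion along the newly added column
  turns independence of the rows into a choice of column with nonzero determinant.\<close>
lemma exists_nonsingular_column_selection: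
  fixes B :: "'a::field mat"
  assumes "B \<in> carrier_mat k n"
    and "\<And>y. (\<forall>c<n. (\<Sum>r<k. y r * B $$ (r, c)) = 0) \<Longrightarrow> \<forall>r<k. y r = 0"
  shows "\<exists>f. (\<forall>c<k. f c < n) \<and> inj_on f {..<k} \<and> det (mat k k (\<lambda>(r, c). B $$ (r, f c))) \<noteq> 0"
  using assms
proof (induct k arbitrary: B)
  case 0
  have "mat 0 0 g = 1\<^sub>m 0" for g :: "nat \<times> nat \<Rightarrow> 'a" by (rule eq_matI) auto
  then have "det (mat 0 0 g) = 1" for g :: "nat \<times> nat \<Rightarrow> 'a" by (metis det_one)
  then show ?case by auto
next
  case (Suc k)
  note B = Suc.prems(1) and indep = Suc.prems(2)
  define B' where "B' = mat k n (\<lambda>(r, c). B $$ (r, c))"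
  have "\<forall>r<k. y r = 0" if y: "\<forall>c<n. (\<Sum>r<k. y r * B' $$ (r, c)) = 0" for y
  proof -
    have "\<forall>c<n. (\<Sum>r<Suc k. (if r < k then y r else 0) * B $$ (r, c)) = 0"
      using y by (simp add: B'_def lessThan_Suc)
    from indep[OF this] show ?thesis by (metis less_SucI)
  qed
  moreover have "B' \<in> carrier_mat k n" by (simp add: B'_def)
  ultimately obtain f' where f'n: "\<forall>c<k. f' c < n" and f'inj: "inj_on f' {..<k}"
    and f'det: "det (mat k k (\<lambda>(r, c). B' $$ (r, f' c))) \<noteq> 0"
    using Suc.hyps by blast
  define C where "C j = mat (Suc k) (Suc k) (\<lambda>(r, c). B $$ (r, if c < k then f' c else j))" for j
  have C: "C j \<in> carrier_mat (Suc k) (Suc k)" for j by (simp add: C_def)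
  define cof where "cof r = cofactor (C 0) r k" for r
  have cof: "cofactor (C j) r k = cof r" for j r
  proof -
    have "mat_delete (C j) r k = mat_delete (C 0) r k"
      by (rule eq_matI) (auto simp: mat_delete_def C_def)
    then show ?thesis by (simp add: cof_def cofactor_def)
  qed
  have det_C: "det (C j) = (\<Sum>r<Suc k. cof r * B $$ (r, j))" for j
    unfolding laplace_expansion_column[OF C lessI] cof by (rule sum.cong) (auto simp: C_def)
  have "mat_delete (C 0) k k = mat k k (\<lambda>(r, c). B' $$ (r, f' c))"
    by (rule eq_matI) (auto simp: mat_delete_def C_def B'_def f'n)
  then have "cof k \<noteq> 0" using f'det by (simp add: cof_def cofactor_def)
  then have "\<not> (\<forall>c<n. (\<Sum>r<Suc k. cof r * B $$ (r, c)) = 0)" using indep by blast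
  then obtain j where j: "j < n" and det_j: "det (C j) \<noteq> 0" by (auto simp: det_C)
  have "j \<notin> f' ` {..<k}"
  proof
    assume "j \<in> f' ` {..<k}"
    then obtain c where "c < k" "j = f' c" by auto
    then have cols: "col (C j) c = col (C j) k" by (intro eq_vecI) (auto simp: C_def)
    have "det (C j) = 0" by (rule det_identical_cols[OF C _ _ _ cols]) (use \<open>c < k\<close> in auto)
    with det_j show False by simp
  qed
  then have "inj_on (f'(k := j)) {..<Suc k}"
    using f'inj by (simp add: lessThan_Suc inj_on_fun_updI)
  moreover have "\<forall>c<Suc k. (f'(k := j)) c < n" using f'n j by (simp add: less_Suc_eq)
  moreover have "mat (Suc k) (Suc k) (\<lambda>(r, c). B $$ (r, (f'(k := j)) c)) = C j"
    by (rule eq_matI) (auto simp: C_def)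
  ultimately show ?case using det_j by metis
qed

lemma finite_card_singular_pencil:
  fixes M\<^sub>0 M\<^sub>1 :: "'a::field mat"
  assumes M\<^sub>0: "M\<^sub>0 \<in> carrier_mat m m" and M\<^sub>1: "M\<^sub>1 \<in> carrier_mat m m" and det: "det M\<^sub>1 \<noteq> 0"
  shows "finite {\<tau>. det (M\<^sub>0 - \<tau> \<cdot>\<^sub>m M\<^sub>1) = 0} \<and> card {\<tau>. det (M\<^sub>0 - \<tau> \<cdot>\<^sub>m M\<^sub>1) = 0} \<le> m"
proof -
  define B where "B = adj_mat M\<^sub>1 * M\<^sub>0"
  note adj = adj_mat[OF M\<^sub>1]
  have B: "B \<in> carrier_mat m m" using adj M\<^sub>0 by (simp add: B_def)
  have eig: "eigenvalue B (\<tau> * det M\<^sub>1)" if sing: "det (M\<^sub>0 - \<tau> \<cdot>\<^sub>m M\<^sub>1) = 0" for \<tau>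
  proof -
    have M\<^sub>1': "\<tau> \<cdot>\<^sub>m M\<^sub>1 \<in> carrier_mat m m" using M\<^sub>1 by (rule smult_carrier_mat)
    have "char_matrix B (\<tau> * det M\<^sub>1) = B - \<tau> \<cdot>\<^sub>m (adj_mat M\<^sub>1 * M\<^sub>1)"
      using adj B by (intro eq_matI) (auto simp: char_matrix_def)
    also have "\<dots> = adj_mat M\<^sub>1 * M\<^sub>0 - adj_mat M\<^sub>1 * (\<tau> \<cdot>\<^sub>m M\<^sub>1)"
      by (simp add: B_def mult_smult_distrib[OF adj(1) M\<^sub>1])
    also have "\<dots> = adj_mat M\<^sub>1 * (M\<^sub>0 - \<tau> \<cdot>\<^sub>m M\<^sub>1)"
      by (rule mult_minus_distrib_mat[OF adj(1) M\<^sub>0 M\<^sub>1', symmetric])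
    finally have "det (char_matrix B (\<tau> * det M\<^sub>1)) = det (adj_mat M\<^sub>1) * det (M\<^sub>0 - \<tau> \<cdot>\<^sub>m M\<^sub>1)"
      by (simp add: det_mult[OF adj(1) minus_carrier_mat[OF M\<^sub>1']])
    then show ?thesis using sing by (simp add: eigenvalue_det[OF B])
  qed
  define R where "R = {x. poly (char_poly B) x = 0}"
  have sub: "{\<tau>. det (M\<^sub>0 - \<tau> \<cdot>\<^sub>m M\<^sub>1) = 0} \<subseteq> (\<lambda>x. x / det M\<^sub>1) ` R"
  proof
    fix \<tau> assume "\<tau> \<in> {\<tau>. det (M\<^sub>0 - \<tau> \<cdot>\<^sub>m M\<^sub>1) = 0}"
    then have "\<tau> * det M\<^sub>1 \<in> R" by (simp add: R_def eigenvalue_root_char_poly[OF B, symmetric] eig)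
    moreover have "\<tau> = \<tau> * det M\<^sub>1 / det M\<^sub>1" using det by simp
    ultimately show "\<tau> \<in> (\<lambda>x. x / det M\<^sub>1) ` R" by blast
  qed
  have "char_poly B \<noteq> 0" and deg: "degree (char_poly B) = m"
    using degree_monic_char_poly[OF B] by auto
  then have fin: "finite R" and card: "card R \<le> m"
    unfolding R_def using card_poly_roots_bound[of "char_poly B"] by (auto intro: poly_roots_finite)
  have "card {\<tau>. det (M\<^sub>0 - \<tau> \<cdot>\<^sub>m M\<^sub>1) = 0} \<le> card ((\<lambda>x. x / det M\<^sub>1) ` R)"
    using fin sub by (intro card_mono) auto
  also have "\<dots> \<le> m" using card_image_le[OF fin] card by (rule order_trans)
  finally show ?thesis using fin sub by (meson finite_imageI finite_subset)
qed

lemma exists_nonsingular_bottom_block: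
  fixes P :: "'a::field mat"
  assumes P: "P \<in> carrier_mat (2 * m) (2 * m)" and det: "det P \<noteq> 0"
  shows "\<exists>f. (\<forall>k<m. f k < 2 * m) \<and> inj_on f {..<m} \<and> det (mat m m (\<lambda>(r, c). P $$ (m + r, f c))) \<noteq> 0"
proof -
  define B where "B = mat m (2 * m) (\<lambda>(r, c). P $$ (m + r, c))"
  have "\<forall>r<m. y r = 0" if y: "\<forall>c<2 * m. (\<Sum>r<m. y r * B $$ (r, c)) = 0" for y
  proof (intro allI impI)
    fix r assume r: "r < m"
    define y' where "y' l = (if m \<le> l then y (l - m) else 0)" for l
    have sums: "(\<Sum>l<2 * m. y' l * P $$ (l, c)) = (\<Sum>r<m. y r * B $$ (r, c))" if "c < 2 * m" for c
    proof -
      have "(\<Sum>l<2 * m. y' l * P $$ (l, c)) = (\<Sum>l\<in>{m..<m + m}. y' l * P $$ (l, c))"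
        by (intro sum.mono_neutral_right) (auto simp: y'_def)
      also have "\<dots> = (\<Sum>r<m. y r * B $$ (r, c))"
        using sum.shift_bounds_nat_ivl[of "\<lambda>l. y' l * P $$ (l, c)" 0 m m] that
        by (simp add: lessThan_atLeast0 add.commute y'_def B_def)
      finally show ?thesis .
    qed
    have "y' (m + r) = 0"
    proof (rule det_nonzero_left_kernel[OF P det])
      fix c assume "c < 2 * m"
      then show "(\<Sum>l<2 * m. y' l * P $$ (l, c)) = 0" using sums y by simp
    qed (use r in simp)
    then show "y r = 0" by (simp add: y'_def)
  qed
  then obtain f where f: "\<forall>k<m. f k < 2 * m" "inj_on f {..<m}"
    and "det (mat m m (\<lambda>(r, c). B $$ (r, f c))) \<noteq> 0"
    using exists_nonsingular_column_selection[of B m "2 * m"] by (auto simp: B_def)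
  moreover have "mat m m (\<lambda>(r, c). B $$ (r, f c)) = mat m m (\<lambda>(r, c). P $$ (m + r, f c))"
    using f by (intro eq_matI) (auto simp: B_def)
  ultimately show ?thesis by auto
qed

lemma left_inverse_row_block_nonzero:
  fixes P Q :: "'a::idom mat"
  assumes n: "n = 2 * m" and P: "P \<in> carrier_mat n n" and Q: "Q \<in> carrier_mat n n"
    and QP: "Q * P = 1\<^sub>m n" and f: "\<forall>k<m. f k < n"
    and top: "det (mat m m (\<lambda>(r, c). P $$ (r, f c))) \<noteq> 0"
    and bot: "det (mat m m (\<lambda>(r, c). P $$ (m + r, f c))) \<noteq> 0"
    and i: "i < n" "i \<notin> f ` {..<m}"
  shows "\<exists>k<m. (\<Sum>l<m. Q $$ (i, l) * P $$ (l, f k)) \<noteq> 0"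
proof (rule ccontr)
  assume top_zero: "\<not> ?thesis"
  have QP_entry: "(\<Sum>l<m. Q $$ (i, l) * P $$ (l, c)) + (\<Sum>r<m. Q $$ (i, m + r) * P $$ (m + r, c))
      = (if i = c then 1 else 0)" if c: "c < n" for c
  proof -
    have "(Q * P) $$ (i, c) = (\<Sum>l<2 * m. Q $$ (i, l) * P $$ (l, c))"
      using P Q i c n by (simp add: scalar_prod_def lessThan_atLeast0)
    also have "\<dots> = (\<Sum>l\<in>{0..<m}. Q $$ (i, l) * P $$ (l, c))
        + (\<Sum>l\<in>{m..<m + m}. Q $$ (i, l) * P $$ (l, c))"
      by (simp add: mult_2 lessThan_atLeast0 sum.atLeastLessThan_concat)
    also have "(\<Sum>l\<in>{m..<m + m}. Q $$ (i, l) * P $$ (l, c))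
        = (\<Sum>r<m. Q $$ (i, m + r) * P $$ (m + r, c))"
      using sum.shift_bounds_nat_ivl[of "\<lambda>l. Q $$ (i, l) * P $$ (l, c)" 0 m m]
      by (simp add: lessThan_atLeast0 add.commute)
    finally show ?thesis using QP i c by (simp add: lessThan_atLeast0)
  qed
  have Q_top: "Q $$ (i, l) = 0" if "l < m" for l
  proof (rule det_nonzero_left_kernel[OF mat_carrier top _ that])
    fix c assume "c < m"
    then show "(\<Sum>r<m. Q $$ (i, r) * mat m m (\<lambda>(r, c). P $$ (r, f c)) $$ (r, c)) = 0"
      using top_zero by (auto intro!: sum.cong)
  qed
  have Q_bot: "Q $$ (i, m + r) = 0" if "r < m" for r
  proof (rule det_nonzero_left_kernel[OF mat_carrier bot _ that])
    fix c assume c: "c < m"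
    then have "(\<Sum>r<m. Q $$ (i, m + r) * P $$ (m + r, f c)) = 0"
      using QP_entry[of "f c"] f i Q_top by auto
    then show "(\<Sum>r<m. Q $$ (i, m + r) * mat m m (\<lambda>(r, c). P $$ (m + r, f c)) $$ (r, c)) = 0"
      using c by (auto intro!: sum.cong)
  qed
  show False using QP_entry[OF i(1)] Q_top Q_bot by simp
qed

section \<open>Krylov matrices of diagonal matrices\<close>

lemma diagonal_mult_index:
  fixes D :: "'a::semiring_0 mat"
  assumes D: "D \<in> carrier_mat n n" and diag: "diagonal_mat D" and Z: "Z \<in> carrier_mat n nc"
    and i: "i < n" and c: "c < nc"
  shows "(D * Z) $$ (i, c) = D $$ (i, i) * Z $$ (i, c)"
proof -
  have "(D * Z) $$ (i, c) = (\<Sum>l\<in>{0..<n}. D $$ (i, l) * Z $$ (l, c))"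
    using D Z i c by (simp add: scalar_prod_def)
  also have "\<dots> = (\<Sum>l\<in>{0..<n}. if l = i then D $$ (i, i) * Z $$ (i, c) else 0)"
    using diag D i by (intro sum.cong) (auto simp: diagonal_mat_def)
  finally show ?thesis using i by simp
qed

lemma diagonal_pow_mult_index:
  fixes D :: "'a::comm_semiring_1 mat"
  assumes D: "D \<in> carrier_mat n n" and diag: "diagonal_mat D" and Z: "Z \<in> carrier_mat n nc"
    and i: "i < n" and c: "c < nc"
  shows "(D ^\<^sub>m k * Z) $$ (i, c) = D $$ (i, i) ^ k * Z $$ (i, c)"
  using Z
proof (induct k arbitrary: Z)
  case 0
  then show ?case using D i c by simp
next
  case (Suc k)
  have DZ: "D * Z \<in> carrier_mat n nc" using D Suc.prems by simp
  have "D ^\<^sub>m Suc k * Z = D ^\<^sub>m k * (D * Z)"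
    using D Suc.prems by (simp add: assoc_mult_mat[of _ n n _ n _ nc])
  then show ?case
    using Suc.hyps[OF DZ] diagonal_mult_index[OF D diag Suc.prems i c] by (simp add: ac_simps)
qed

lemma degree_sum_monom_less: "0 < m \<Longrightarrow> degree (\<Sum>k<m. monom (c k) k) < m"
  by (rule le_less_trans[OF degree_sum_le[of _ _ "m - 1"]])
    (auto simp: degree_monom_le[THEN order_trans])

lemma krylov_diagonal_mult_vec_index:
  fixes D Z :: "'a::comm_ring_1 mat"
  assumes n: "n = 2 * m" and D: "D \<in> carrier_mat n n" and diag: "diagonal_mat D"
    and Z: "Z \<in> carrier_mat n 2" and v: "v \<in> carrier_vec n" and i: "i < n"
  shows "(krylov D Z *\<^sub>v v) $ i = Z $$ (i, 0) * poly (\<Sum>k<m. monom (v $ (2 * k)) k) (D $$ (i, i))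
    + Z $$ (i, 1) * poly (\<Sum>k<m. monom (v $ (2 * k + 1)) k) (D $$ (i, i))"
proof -
  let ?d = "D $$ (i, i)"
  have two: "2 dvd n" using n by simp
  have pairs: "(\<Sum>j<2 * m. g j) = (\<Sum>k<m. g (2 * k) + g (2 * k + 1))" for g :: "nat \<Rightarrow> 'a"
    by (induct m) (auto simp: mult_2 ac_simps)
  have "(krylov D Z *\<^sub>v v) $ i = (\<Sum>j<n. krylov D Z $$ (i, j) * v $ j)"
    using krylov_carrier[OF D Z two] v i by (simp add: scalar_prod_def lessThan_atLeast0)
  also have "\<dots> = (\<Sum>j<2 * m. ?d ^ (j div 2) * Z $$ (i, j mod 2) * v $ j)"
    using i n
    by (intro sum.cong) (auto simp: krylov_index[OF D Z two] diagonal_pow_mult_index[OF D diag Z])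
  also have "\<dots> = (\<Sum>k<m. ?d ^ k * Z $$ (i, 0) * v $ (2 * k)
      + ?d ^ k * Z $$ (i, 1) * v $ (2 * k + 1))"
    by (subst pairs) simp
  also have "\<dots> = Z $$ (i, 0) * poly (\<Sum>k<m. monom (v $ (2 * k)) k) ?d
      + Z $$ (i, 1) * poly (\<Sum>k<m. monom (v $ (2 * k + 1)) k) ?d"
    by (simp add: poly_sum poly_monom sum.distrib sum_distrib_left ac_simps)
  finally show ?thesis .
qed

lemma even_odd_monom_sums_eq_0_imp_zero:
  assumes v: "v \<in> carrier_vec (2 * m)"
    and "(\<Sum>k<m. monom (v $ (2 * k)) k) = 0" "(\<Sum>k<m. monom (v $ (2 * k + 1)) k) = 0"
  shows "v = 0\<^sub>v (2 * m)"
proof (rule eq_vecI)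
  fix j assume j: "j < dim_vec (0\<^sub>v (2 * m) :: 'a vec)"
  have "v $ (2 * k) = 0" "v $ (2 * k + 1) = 0" if "k < m" for k
    using assms(2,3) that by (auto simp: coeff_sum dest!: arg_cong[of _ _ "\<lambda>p. coeff p k"])
  moreover have "j div 2 < m" "j = 2 * (j div 2) \<or> j = 2 * (j div 2) + 1" using j by auto
  ultimately have "v $ j = 0" by metis
  then show "v $ j = 0\<^sub>v (2 * m) $ j" using j by simp
qed (use v in simp)

text \<open>A kernel vector of the Krylov matrix of a diagonal matrix with entries d i is a pair of
  polynomials F, G of degree < m with Z(i,0) F(d i) + Z(i,1) G(d i) = 0 for all i.
  The m rows with equal nonzero entries force F + G = 0, and the other m rows then force F = 0.\<close>
lemma krylov_diagonal_det_nonzero: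
  fixes D Z :: "'a::idom mat"
  assumes n: "n = 2 * m" and D: "D \<in> carrier_mat n n" and diag: "diagonal_mat D"
    and dist: "distinct (diag_mat D)" and Z: "Z \<in> carrier_mat n 2"
    and card: "card {i. i < n \<and> Z $$ (i, 0) = Z $$ (i, 1)} = m"
    and nz: "\<And>i. i < n \<Longrightarrow> Z $$ (i, 0) = Z $$ (i, 1) \<Longrightarrow> Z $$ (i, 0) \<noteq> 0"
  shows "det (krylov D Z) \<noteq> 0"
proof -
  let ?d = "\<lambda>i. D $$ (i, i)"
  define E where "E = {i. i < n \<and> Z $$ (i, 0) = Z $$ (i, 1)}"
  have K: "krylov D Z \<in> carrier_mat n n" using n by (intro krylov_carrier[OF D Z]) simp
  have "v = 0\<^sub>v n" if v: "v \<in> carrier_vec n" and Kv: "krylov D Z *\<^sub>v v = 0\<^sub>v n" for v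
  proof (cases "m = 0")
    case True
    then show ?thesis using v n by (intro eq_vecI) auto
  next
    case False
    define F where "F = (\<Sum>k<m. monom (v $ (2 * k)) k)"
    define G where "G = (\<Sum>k<m. monom (v $ (2 * k + 1)) k)"
    have row: "Z $$ (i, 0) * poly F (?d i) + Z $$ (i, 1) * poly G (?d i) = 0" if "i < n" for i
      using krylov_diagonal_mult_vec_index[OF n D diag Z v that] Kv that by (simp add: F_def G_def)
    have inj: "inj_on ?d {..<n}"
      using dist D by (simp add: diag_mat_def distinct_map atLeast0LessThan)
    have E: "E \<subseteq> {..<n}" "card E = m" using card by (auto simp: E_def)
    then have "card ({..<n} - E) = m" using n by (simp add: card_Diff_subset finite_subset)
    then have card_E: "card (?d ` E) = m" "card (?d ` ({..<n} - E)) = m"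
      using E inj by (simp_all add: card_image inj_on_subset)
    have deg: "degree F < m" "degree G < m"
      using False by (simp_all add: F_def G_def degree_sum_monom_less)
    have "F + G = 0"
    proof (rule poly_eqI_degree[of "?d ` E"])
      fix x assume "x \<in> ?d ` E"
      then obtain i where "i < n" "Z $$ (i, 0) = Z $$ (i, 1)" "x = ?d i" by (auto simp: E_def)
      with row nz show "poly (F + G) x = poly 0 x"
        by (metis distrib_left mult_eq_0_iff poly_0 poly_add)
    qed (use card_E deg False in \<open>auto intro: degree_add_less\<close>)
    then have G: "G = - F" by (simp add: add_eq_0_iff)
    have "F = 0"
    proof (rule poly_eqI_degree[of "?d ` ({..<n} - E)"])
      fix x assume "x \<in> ?d ` ({..<n} - E)"
      then obtain i where "i < n" "Z $$ (i, 0) \<noteq> Z $$ (i, 1)" "x = ?d i" by (auto simp: E_def)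
      with row[of i] show "poly F x = poly 0 x" by (simp add: G algebra_simps)
    qed (use card_E deg False in auto)
    with G show ?thesis
      using even_odd_monom_sums_eq_0_imp_zero[of v m] v n by (simp add: F_def G_def)
  qed
  then show ?thesis using det_0_iff_vec_prod_zero[OF K] by auto
qed

lemma const_poly_hom: "comm_ring_hom (\<lambda>x::'a::comm_ring_1. [:x:])"
  by unfold_locales (auto simp: one_pCons)

lemma coeff_const_poly_mult_mat_vec:
  assumes "A \<in> carrier_mat nr nc" "w \<in> carrier_vec nc" "i < nr"
  shows "coeff ((map_mat (\<lambda>x. [:x:]) A *\<^sub>v w) $ i) d = (A *\<^sub>v map_vec (\<lambda>p. coeff p d) w) $ i"
  using assms by (simp add: scalar_prod_def coeff_sum)

lemma conj_vblock_entries: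
  fixes P Q :: "'a::comm_ring_1 mat" and e :: "'a poly vec"
  assumes n: "n = 2 * m" and P: "P \<in> carrier_mat n n" and Q: "Q \<in> carrier_mat n n"
    and QP: "Q * P = 1\<^sub>m n" and e: "e \<in> carrier_vec n" and i: "i < n"
  defines "u \<equiv> map_mat (\<lambda>x. [:x:]) P *\<^sub>v e"
  defines "Z \<equiv> map_mat (\<lambda>x. [:x:]) Q * vblock m (\<lambda>r. u $ r) (\<lambda>r. - u $ (m + r))"
  shows "Z $$ (i, 0) - Z $$ (i, 1) = e $ i"
    and "coeff (Z $$ (i, 0)) d = (\<Sum>l<m. Q $$ (i, l) * coeff (u $ l) d)"
proof -
  interpret \<iota>: comm_ring_hom "\<lambda>x::'a. [:x:]" by (rule const_poly_hom)
  define V where "V = vblock m (\<lambda>r. u $ r) (\<lambda>r. - u $ (m + r))"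
  define W where "W = map_mat (\<lambda>x. [:x:]) Q"
  have u: "u \<in> carrier_vec n" and V: "V \<in> carrier_mat n 2" and W: "W \<in> carrier_mat n n"
    using P Q e n by (auto simp: u_def V_def W_def)
  have Z: "Z = W * V" by (simp add: Z_def W_def V_def)
  have "col Z 0 - col Z 1 = W *\<^sub>v col V 0 - W *\<^sub>v col V 1"
    using col_mult2[OF W V, of 0] col_mult2[OF W V, of 1] by (simp only: Z)
  also have "\<dots> = W *\<^sub>v (col V 0 - col V 1)"
    using V by (intro mult_minus_distrib_mat_vec[OF W, symmetric]) auto
  also have "col V 0 - col V 1 = u" using u n by (intro eq_vecI) (auto simp: V_def vblock_def)
  also have "W *\<^sub>v u = map_mat (\<lambda>x. [:x:]) (Q * P) *\<^sub>v e"
    using P Q e by (simp add: W_def u_def \<iota>.mat_hom_mult)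
  also have "\<dots> = e" using e by (simp add: QP \<iota>.mat_hom_one)
  finally show "Z $$ (i, 0) - Z $$ (i, 1) = e $ i"
    using arg_cong[of _ _ "\<lambda>v. v $ i"] i W V by (fastforce simp: Z)
  have "col V 0 \<in> carrier_vec n" using V by (metis carrier_matD(1) col_dim)
  moreover have "Z $$ (i, 0) = (W *\<^sub>v col V 0) $ i" using W V i by (simp add: Z)
  ultimately have "coeff (Z $$ (i, 0)) d = (Q *\<^sub>v map_vec (\<lambda>p. coeff p d) (col V 0)) $ i"
    using coeff_const_poly_mult_mat_vec[OF Q _ i] by (simp add: W_def)
  also have "\<dots> = (\<Sum>l\<in>{0..<n}. Q $$ (i, l) * (if l < m then coeff (u $ l) d else 0))"
    using Q V i n by (auto simp: scalar_prod_def V_def vblock_def intro!: sum.cong)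
  also have "\<dots> = (\<Sum>l<m. Q $$ (i, l) * coeff (u $ l) d)"
    using n by (intro sum.mono_neutral_cong_right) auto
  finally show "coeff (Z $$ (i, 0)) d = (\<Sum>l<m. Q $$ (i, l) * coeff (u $ l) d)" .
qed

text \<open>The indeterminates are specialised to polynomials in a fresh variable x, chosen so that
  after conjugation by Q the difference of the two columns of v is e, with e j = x ^ j on
  J = f ` {..<m} and 0 elsewhere. Outside J the coefficient of x ^ f k in the first column is
  the sum in left_inverse_row_block_nonzero, so these entries are nonzero.\<close>
lemma exists_poly_vblock_det_krylov_nonzero:
  fixes P Q D :: "'a::idom mat"
  assumes n: "n = 2 * m" and P: "P \<in> carrier_mat n n" and Q: "Q \<in> carrier_mat n n"
    and D: "D \<in> carrier_mat n n" and QP: "Q * P = 1\<^sub>m n"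
    and diag: "diagonal_mat D" and dist: "distinct (diag_mat D)"
    and f: "\<forall>k<m. f k < n" "inj_on f {..<m}"
    and top: "det (mat m m (\<lambda>(r, c). P $$ (r, f c))) \<noteq> 0"
    and bot: "det (mat m m (\<lambda>(r, c). P $$ (m + r, f c))) \<noteq> 0"
  shows "\<exists>a b. det (krylov (map_mat (\<lambda>x. [:x:]) (P * D * Q)) (vblock m a b)) \<noteq> 0"
proof -
  define \<iota> :: "'a \<Rightarrow> 'a poly" where "\<iota> = (\<lambda>x. [:x:])"
  interpret \<iota>: comm_ring_hom \<iota> unfolding \<iota>_def by (rule const_poly_hom)
  define J where "J = f ` {..<m}"
  define e :: "'a poly vec" where "e = vec n (\<lambda>j. if j \<in> J then monom 1 j else 0)"
  define u where "u = map_mat \<iota> P *\<^sub>v e"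
  define V where "V = vblock m (\<lambda>r. u $ r) (\<lambda>r. - u $ (m + r))"
  define W where "W = map_mat \<iota> Q"
  have e: "e \<in> carrier_vec n" by (simp add: e_def)
  have V: "V \<in> carrier_mat n 2" and W: "W \<in> carrier_mat n n" and Z: "W * V \<in> carrier_mat n 2"
    using Q n by (auto simp: V_def W_def)
  note entries = conj_vblock_entries[OF n P Q QP e, folded \<iota>_def, folded u_def, folded V_def W_def]
  have PD: "P * D \<in> carrier_mat n n" using P D by simp
  have "Q * (P * D * Q) = Q * (P * D) * Q" by (rule assoc_mult_mat[OF Q PD Q, symmetric])
  also have "Q * (P * D) = D" using D QP by (simp add: assoc_mult_mat[OF Q P D, symmetric])
  finally have "map_mat \<iota> (Q * (P * D * Q)) = map_mat \<iota> D * W"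
    by (simp add: W_def \<iota>.mat_hom_mult[OF D Q])
  then have intertwine: "W * map_mat \<iota> (P * D * Q) = map_mat \<iota> D * W"
    using \<iota>.mat_hom_mult[OF Q mult_carrier_mat[OF PD Q]] by (simp add: W_def)
  have "map_vec (\<lambda>p. coeff p (f k)) e = unit_vec n (f k)" if "k < m" for k
    using f that by (intro eq_vecI) (auto simp: e_def J_def)
  then have "coeff (u $ l) (f k) = P $$ (l, f k)" if "l < n" "k < m" for l k
    using coeff_const_poly_mult_mat_vec[OF P e that(1)] P f that by (simp add: u_def \<iota>_def)
  then have coeff_Z: "coeff ((W * V) $$ (i, 0)) (f k) = (\<Sum>l<m. Q $$ (i, l) * P $$ (l, f k))"
    if "i < n" "k < m" for i k
    using entries(2)[OF that(1)] that n by simp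
  have same: "(W * V) $$ (i, 0) = (W * V) $$ (i, 1) \<longleftrightarrow> i \<notin> J" if "i < n" for i
    using entries(1)[OF that] that by (subst eq_iff_diff_eq_0) (simp add: e_def)
  have "det (krylov (map_mat \<iota> D) (W * V)) \<noteq> 0"
  proof (rule krylov_diagonal_det_nonzero[OF n _ _ _ Z])
    show "map_mat \<iota> D \<in> carrier_mat n n" using D by simp
    show "diagonal_mat (map_mat \<iota> D)" using diag by (simp add: diagonal_mat_def)
    show "distinct (diag_mat (map_mat \<iota> D))"
      using dist by (simp add: diag_mat_map[OF D] distinct_map inj_on_def \<iota>_def)
    have "{i. i < n \<and> (W * V) $$ (i, 0) = (W * V) $$ (i, 1)} = {..<n} - J" using same by auto
    then show "card {i. i < n \<and> (W * V) $$ (i, 0) = (W * V) $$ (i, 1)} = m"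
      using f n by (simp add: J_def card_Diff_subset card_image subset_eq)
    fix i assume i: "i < n" and "(W * V) $$ (i, 0) = (W * V) $$ (i, 1)"
    then have "i \<notin> J" using same by simp
    then obtain k where "k < m" "(\<Sum>l<m. Q $$ (i, l) * P $$ (l, f k)) \<noteq> 0"
      using left_inverse_row_block_nonzero[OF n P Q QP f(1) top bot i] by (auto simp: J_def)
    then show "(W * V) $$ (i, 0) \<noteq> 0" using coeff_Z[OF i] by force
  qed
  then have "det (krylov (map_mat \<iota> (P * D * Q)) V) \<noteq> 0"
    using P Q D V n by (intro det_krylov_nonzero_intertwine[OF W _ _ intertwine V]) auto
  then show ?thesis by (auto simp: V_def \<iota>_def)
qed

section \<open>The sheared matrix\<close>

lemma dim_shear [simp]: "dim_row (shear m t) = 2 * m" "dim_col (shear m t) = 2 * m"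
  by (auto simp: shear_def)

lemma shear_carrier [simp]: "shear m t \<in> carrier_mat (2 * m) (2 * m)"
  by (rule carrier_matI) simp_all

lemma shear_index:
  "i < 2 * m \<Longrightarrow> j < 2 * m \<Longrightarrow>
    shear m t $$ (i, j) = (if j = i then 1 else 0) + (if j = m + i then t else 0)"
  by (auto simp: shear_def)

lemma shear_mult_index:
  assumes P: "P \<in> carrier_mat (2 * m) nc" and r: "r < m" and c: "c < nc"
  shows "(shear m t * P) $$ (r, c) = P $$ (r, c) + t * P $$ (m + r, c)"
    and "(shear m t * P) $$ (m + r, c) = P $$ (m + r, c)"
proof -
  have "(shear m t * P) $$ (i, c) = (\<Sum>l\<in>{0..<2 * m}. (if l = i then P $$ (l, c) else 0)
      + (if l = m + i then t * P $$ (l, c) else 0))" if i: "i < 2 * m" for i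
  proof -
    have "(shear m t * P) $$ (i, c) = (\<Sum>l\<in>{0..<2 * m}. shear m t $$ (i, l) * P $$ (l, c))"
      using P c i by (simp add: scalar_prod_def)
    also have "\<dots> = (\<Sum>l\<in>{0..<2 * m}. (if l = i then P $$ (l, c) else 0)
        + (if l = m + i then t * P $$ (l, c) else 0))"
      using i by (intro sum.cong) (auto simp: shear_index)
    finally show ?thesis .
  qed
  then show "(shear m t * P) $$ (r, c) = P $$ (r, c) + t * P $$ (m + r, c)"
    and "(shear m t * P) $$ (m + r, c) = P $$ (m + r, c)"
    using r by (simp_all add: sum.distrib)
qed

lemma shear_mult_shear_uminus: "shear m (t::'a::comm_ring_1) * shear m (- t) = 1\<^sub>m (2 * m)"
proof -
  have "shear m t * shear m (- t) = four_block_mat (1\<^sub>m m * 1\<^sub>m m + t \<cdot>\<^sub>m 1\<^sub>m m * 0\<^sub>m m m)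
      (1\<^sub>m m * (- t \<cdot>\<^sub>m 1\<^sub>m m) + t \<cdot>\<^sub>m 1\<^sub>m m * 1\<^sub>m m)
      (0\<^sub>m m m * 1\<^sub>m m + 1\<^sub>m m * 0\<^sub>m m m) (0\<^sub>m m m * (- t \<cdot>\<^sub>m 1\<^sub>m m) + 1\<^sub>m m * 1\<^sub>m m)"
    unfolding shear_def by (rule mult_four_block_mat) auto
  also have "\<dots> = four_block_mat (1\<^sub>m m) (0\<^sub>m m m) (0\<^sub>m m m) (1\<^sub>m m)"
    by (intro arg_cong4[where f = four_block_mat]; rule eq_matI) auto
  finally show ?thesis by (simp add: mult_2)
qed

lemma (in comm_ring_hom) map_shear: "map_mat hom (shear m t) = shear m (hom t)"
  by (rule eq_matI) (auto simp: shear_index hom_add)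

lemma (in comm_ring_hom) map_A_tilde:
  assumes A: "A \<in> carrier_mat (2 * m) (2 * m)"
  shows "map_mat hom (A_tilde m t A) = shear m (- hom t) * map_mat hom A * shear m (hom t)"
proof -
  have "map_mat hom (A_tilde m t A) = map_mat hom (shear m (- t) * A) * map_mat hom (shear m t)"
    unfolding A_tilde_def
    by (rule mat_hom_mult[OF mult_carrier_mat[OF shear_carrier A] shear_carrier])
  also have "map_mat hom (shear m (- t) * A) = map_mat hom (shear m (- t)) * map_mat hom A"
    by (rule mat_hom_mult[OF shear_carrier A])
  finally show ?thesis by (simp add: map_shear hom_uminus)
qed

lemma shear_conj:
  fixes P Q D :: "'a::comm_ring_1 mat"
  assumes P: "P \<in> carrier_mat (2 * m) (2 * m)" and Q: "Q \<in> carrier_mat (2 * m) (2 * m)"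
    and D: "D \<in> carrier_mat (2 * m) (2 * m)" and QP: "Q * P = 1\<^sub>m (2 * m)"
  shows "(Q * shear m c) * (shear m (- c) * P) = 1\<^sub>m (2 * m)"
    and "shear m (- c) * (P * D * Q) * shear m c = (shear m (- c) * P) * D * (Q * shear m c)"
proof -
  have "(Q * shear m c) * (shear m (- c) * P) = Q * (shear m c * (shear m (- c) * P))"
    by (rule assoc_mult_mat[OF Q shear_carrier mult_carrier_mat[OF shear_carrier P]])
  also have "shear m c * (shear m (- c) * P) = P"
    using P by (simp add: assoc_mult_mat[OF shear_carrier shear_carrier P, symmetric]
        shear_mult_shear_uminus)
  finally show "(Q * shear m c) * (shear m (- c) * P) = 1\<^sub>m (2 * m)" using QP by simp
  show "shear m (- c) * (P * D * Q) * shear m c = (shear m (- c) * P) * D * (Q * shear m c)"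
    using P Q D by (simp add: assoc_mult_mat[of _ "2 * m" "2 * m" _ "2 * m" _ "2 * m"])
qed

lemma det_krylov_A_tilde_nonzero:
  fixes A :: "'a::field mat" and P Q D :: "'b::field mat" and h :: "'a \<Rightarrow> 'b"
  assumes n: "n = 2 * m" and A: "A \<in> carrier_mat n n" and h: "field_hom h"
    and P: "P \<in> carrier_mat n n" and Q: "Q \<in> carrier_mat n n" and D: "D \<in> carrier_mat n n"
    and QP: "Q * P = 1\<^sub>m n" and hA: "map_mat h A = P * D * Q"
    and diag: "diagonal_mat D" and dist: "distinct (diag_mat D)"
    and f: "\<forall>k<m. f k < n" "inj_on f {..<m}"
    and bot: "det (mat m m (\<lambda>(r, c). P $$ (m + r, f c))) \<noteq> 0"
    and top: "det (mat m m (\<lambda>(r, c). P $$ (r, f c))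
      - h t \<cdot>\<^sub>m mat m m (\<lambda>(r, c). P $$ (m + r, f c))) \<noteq> 0"
  shows "det (krylov (map_mat mp_const (A_tilde m t A)) (v_indet m)) \<noteq> 0 \<and>
    (infinite (UNIV :: 'a set) \<longrightarrow> (\<exists>a b. det (krylov (A_tilde m t A) (vblock m a b)) \<noteq> 0))"
proof -
  interpret h: field_hom h by (rule h)
  define P' where "P' = shear m (- h t) * P"
  define Q' where "Q' = Q * shear m (h t)"
  have P': "P' \<in> carrier_mat n n"
    unfolding P'_def n using shear_carrier P[unfolded n] by (rule mult_carrier_mat)
  have Q': "Q' \<in> carrier_mat n n"
    unfolding Q'_def n using Q[unfolded n] shear_carrier by (rule mult_carrier_mat)
  note conj = shear_conj[OF P[unfolded n] Q[unfolded n] D[unfolded n] QP[unfolded n], of "h t",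
      folded P'_def Q'_def n]
  have M: "A_tilde m t A \<in> carrier_mat n n" unfolding A_tilde_def n
    by (rule mult_carrier_mat[OF mult_carrier_mat[OF shear_carrier A[unfolded n]] shear_carrier])
  have hM: "map_mat h (A_tilde m t A) = P' * D * Q'"
    using A n by (simp add: h.map_A_tilde hA conj(2))
  have "P' $$ (r, c) = P $$ (r, c) - h t * P $$ (m + r, c)" "P' $$ (m + r, c) = P $$ (m + r, c)"
    if "r < m" "c < n" for r c
    using shear_mult_index[OF P[unfolded n] that[unfolded n], of "- h t"] by (simp_all add: P'_def)
  then have top_eq: "mat m m (\<lambda>(r, c). P' $$ (r, f c)) =
      mat m m (\<lambda>(r, c). P $$ (r, f c)) - h t \<cdot>\<^sub>m mat m m (\<lambda>(r, c). P $$ (m + r, f c))"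
    and bot_eq: "mat m m (\<lambda>(r, c). P' $$ (m + r, f c)) = mat m m (\<lambda>(r, c). P $$ (m + r, f c))"
    using f by auto
  obtain a b where "det (krylov (map_mat (\<lambda>x. [:x:]) (P' * D * Q')) (vblock m a b)) \<noteq> 0"
    using exists_poly_vblock_det_krylov_nonzero[OF n P' Q' D conj(1) diag dist f
        top[folded top_eq] bot[folded bot_eq]] by blast
  moreover define g where "g x = [:h x:]" for x
  moreover have "map_mat (\<lambda>x. [:x:]) (P' * D * Q') = map_mat g (A_tilde m t A)"
    by (rule eq_matI) (auto simp: hM[symmetric] g_def)
  moreover have g: "comm_ring_hom g" "inj g"
    by (unfold_locales, auto simp: g_def h.hom_add h.hom_mult one_pCons inj_def)
  ultimately show ?thesis
    using det_krylov_v_indet_nonzero[OF g(1)] exists_vblock_det_krylov_nonzero[OF _ g] M n by auto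
qed

theorem mainTheorem2:
  fixes A :: "'a::field mat" and D :: "'b::field mat"
    and h :: "'a \<Rightarrow> 'b" and n m :: nat
  assumes "n = 2 * m" and "0 < m"
    and "A \<in> carrier_mat n n"
    and "field_hom h"
    and "similar_mat (map_mat h A) D" and "diagonal_mat D" and "distinct (diag_mat D)"
  shows "\<exists>S :: 'a set. finite S \<and> card S \<le> m \<and>
    (\<forall>t. t \<notin> S \<longrightarrow>
       det (krylov (map_mat mp_const (A_tilde m t A)) (v_indet m)) \<noteq> 0 \<and>
       (infinite (UNIV :: 'a set) \<longrightarrow>
          (\<exists>a b :: nat \<Rightarrow> 'a. det (krylov (A_tilde m t A) (vblock m a b)) \<noteq> 0)))"
proof -
  note n = assms(1) and A = assms(3) and h = assms(4)
  interpret h: field_hom h by (rule h)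
  obtain P Q where "similar_mat_wit (map_mat h A) D P Q"
    using assms(5) by (auto simp: similar_mat_def)
  then have P: "P \<in> carrier_mat n n" and Q: "Q \<in> carrier_mat n n" and D: "D \<in> carrier_mat n n"
    and PQ: "P * Q = 1\<^sub>m n" and QP: "Q * P = 1\<^sub>m n" and hA: "map_mat h A = P * D * Q"
    using A by (auto simp: similar_mat_wit_def Let_def)
  have "det P \<noteq> 0" using det_mult[OF P Q] PQ by auto
  then obtain f where f: "\<forall>k<m. f k < n" "inj_on f {..<m}"
    and bot: "det (mat m m (\<lambda>(r, c). P $$ (m + r, f c))) \<noteq> 0"
    using exists_nonsingular_bottom_block[of P m] P n by auto
  define Bad where "Bad = {\<tau>. det (mat m m (\<lambda>(r, c). P $$ (r, f c))
      - \<tau> \<cdot>\<^sub>m mat m m (\<lambda>(r, c). P $$ (m + r, f c))) = 0}"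
  have Bad: "finite Bad" "card Bad \<le> m"
    using finite_card_singular_pencil[OF mat_carrier mat_carrier bot] by (simp_all add: Bad_def)
  have "finite (h -` Bad)" by (rule finite_vimageI[OF Bad(1) h.inj_f])
  moreover have "card (h -` Bad) \<le> m"
    using card_vimage_inj_on_le[OF h.inj_f Bad(1)] Bad(2) by simp
  moreover have "det (krylov (map_mat mp_const (A_tilde m t A)) (v_indet m)) \<noteq> 0 \<and>
      (infinite (UNIV :: 'a set) \<longrightarrow> (\<exists>a b. det (krylov (A_tilde m t A) (vblock m a b)) \<noteq> 0))"
    if "t \<notin> h -` Bad" for t
    using that Bad_def
    by (intro det_krylov_A_tilde_nonzero[OF n A h P Q D QP hA assms(6,7) f bot]) simp
  ultimately show ?thesis by blast
qed

end
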